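(* Let $G$ be a disjoint union of finitely many star graphs $S_{n_1},\dots,S_{n_r}$ ($r\ge 1$, each $n_i\ge 1$). Under optimal play, the result of the Sign Game on $G$ is: (1) a draw if every $n_i$ is even; (2) a win for Player 2 if at least one $n_i$ is odd and the number of indices $i$ with $n_i$ even is even; (3) a win for Player 1 if at least one $n_i$ is odd and the number of indices $i$ with $n_i$ even is odd.
   Context: The Sign Game on a finite simple undirected graph $G$: two players, Player P and Player N, alternate turns; the player who moves first is called Player 1 and the other Player 2 (either of P, N may be Player 1). On a turn, a player chooses a vertex of $G$ not yet assigned a value and assigns it $+1$ or $-1$. The game ends when every vertex has been assigned. The score of an edge $uv$ is the product of the values of $u$ and $v$, and the score $s(G)$ of the game is the sum of the scores of all edges. Player P wins if $s(G)>0$, Player N wins if $s(G)<0$, and the game is a draw if $s(G)=0$. "Under optimal play" means both players play optimally, each with primary goal of winning and secondary goal of at least drawing; the result is the outcome of this finite perfect-information game under such play. The star graph $S_n$ has $n+1$ vertices: one central vertex adjacent to each of $n$ leaves, with no other edges. *)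

theory Defs
  imports Main
begin

text \<open>A graph is given by a finite vertex set V and a set Ed of edges, each edge
being a 2-element subset of V. A (partial) position of the Sign Game is a map
a :: 'a \<Rightarrow> int with a v \<in> {1,-1} for assigned vertices and a v = 0 for
unassigned ones.\<close>

definition sg_score :: "'a set set \<Rightarrow> ('a \<Rightarrow> int) \<Rightarrow> int" where
  "sg_score Ed a = (\<Sum>e\<in>Ed. \<Prod>v\<in>e. a v)"

definition sg_unassigned :: "'a set \<Rightarrow> ('a \<Rightarrow> int) \<Rightarrow> 'a set" where
  "sg_unassigned V a = {v\<in>V. a v = 0}"

text \<open>Value of the game under optimal play, encoded as +1 (P wins), 0 (draw),
-1 (N wins). P maximises, N minimises this outcome (primary goal win,
secondary goal draw). The boolean says whether it is P's turn; the nat is fuel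
(number of remaining moves).\<close>

fun sg_val :: "'a set \<Rightarrow> 'a set set \<Rightarrow> nat \<Rightarrow> bool \<Rightarrow> ('a \<Rightarrow> int) \<Rightarrow> int" where
  "sg_val V Ed 0 pturn a = sgn (sg_score Ed a)"
| "sg_val V Ed (Suc k) pturn a =
     (if sg_unassigned V a = {} then sgn (sg_score Ed a)
      else (if pturn then Max else Min)
        {sg_val V Ed k (\<not> pturn) (a(v := s)) | v s. v \<in> sg_unassigned V a \<and> s \<in> {1, -1}})"

text \<open>Outcome of the Sign Game on (V, Ed) under optimal play, where P_first says
whether Player P is Player 1.\<close>

definition sign_game_result :: "'a set \<Rightarrow> 'a set set \<Rightarrow> bool \<Rightarrow> int" where
  "sign_game_result V Ed P_first = sg_val V Ed (card V) P_first (\<lambda>_. 0)"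

text \<open>Disjoint union of stars S_{ns!0}, ..., S_{ns!(r-1)}: vertex (i,0) is the
centre of star i, vertices (i,j) with 1 \<le> j \<le> ns!i are its leaves.\<close>

definition stars_V :: "nat list \<Rightarrow> (nat \<times> nat) set" where
  "stars_V ns = {(i, j). i < length ns \<and> j \<le> ns ! i}"

definition stars_E :: "nat list \<Rightarrow> (nat \<times> nat) set set" where
  "stars_E ns = {{(i, 0), (i, j)} | i j. i < length ns \<and> 1 \<le> j \<and> j \<le> ns ! i}"

end

theory Submission
  imports Defs
begin

text \<open>The score is the sum over the stars of \<open>c (l\<^sub>1 + \<dots> + l\<^sub>n)\<close>, where \<open>c\<close> is the value
  of the centre and \<open>l\<^sub>j\<close> those of the leaves. The player with sign \<open>\<sigma>\<close> pairs the leaves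
  \<open>2m+1, 2m+2\<close> of each star and answers a move on a leaf by a move on its partner: with the opposite
  value while the centre is unassigned, with \<open>\<sigma> c\<close> once the centre is \<open>c\<close>. Every pair then
  contributes \<open>\<sigma> c (p + q) \<ge> 0\<close> to \<open>\<sigma> s(G)\<close>. In an odd star the last leaf is paired with
  the centre, and answering one by the other so that the leaf is \<open>\<sigma> c\<close> makes it contribute 1.

  If all stars are even, the moves that need no answer are centres and completions of
  half-filled pairs; after one of them the player assigns another centre, or sets a leaf to
  \<open>\<sigma> c\<close> and leaves its pair half-filled in its own favour. Hence either player secures
  \<open>\<sigma> s(G) \<ge> 0\<close> and the game is a draw.

  If some star is odd, the only moves that cannot be answered inside their own star are the
  centres of even stars, and these answer each other. The player who can always hand the
  opponent an even number of unassigned centres of even stars secures \<open>\<sigma> s(G) \<ge> 1\<close>: Player 2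
  if the number of even stars is even, Player 1 otherwise.\<close>

section \<open>Values guaranteed by a strategy\<close>

lemma finite_sg_unassigned: "finite V \<Longrightarrow> finite (sg_unassigned V a)"
  by (simp add: sg_unassigned_def)

lemma sg_val_Suc_moves:
  assumes "sg_unassigned V a \<noteq> {}"
  shows "sg_val V Ed (Suc k) p a = (if p then Max else Min)
           ((\<lambda>(v, s). sg_val V Ed k (\<not> p) (a(v := s))) ` (sg_unassigned V a \<times> {1, -1}))"
proof -
  have "{sg_val V Ed k (\<not> p) (a(v := s)) | v s. v \<in> sg_unassigned V a \<and> s \<in> {1, -1}} =
        (\<lambda>(v, s). sg_val V Ed k (\<not> p) (a(v := s))) ` (sg_unassigned V a \<times> {1, -1})"
    by auto
  then show ?thesis
    using assms by simp
qed

lemma sg_val_range: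
  assumes "finite V"
  shows "sg_val V Ed k p a \<in> {-1, 0, 1}"
proof (induction k arbitrary: p a)
  case 0
  show ?case by (simp add: sgn_if)
next
  case (Suc k)
  show ?case
  proof (cases "sg_unassigned V a = {}")
    case True
    then show ?thesis by (simp add: sgn_if)
  next
    case False
    let ?S = "(\<lambda>(v, s). sg_val V Ed k (\<not> p) (a(v := s))) ` (sg_unassigned V a \<times> {1, -1})"
    have "finite ?S" "?S \<noteq> {}"
      using False finite_sg_unassigned[OF assms] by auto
    moreover have "?S \<subseteq> {-1, 0, 1}"
      using Suc.IH by auto
    ultimately have "Max ?S \<in> {-1, 0, 1}" "Min ?S \<in> {-1, 0, 1}"
      by (meson Max_in Min_in subsetD)+
    then show ?thesis
      unfolding sg_val_Suc_moves[OF False] by (cases p) auto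
  qed
qed

lemma sg_val_Suc_move_bound:
  fixes \<sigma> :: int
  assumes "finite V" "\<sigma> \<in> {1, -1}" "v \<in> sg_unassigned V a" "s \<in> {1, -1}"
  shows "\<sigma> * sg_val V Ed k (\<sigma> \<noteq> 1) (a(v := s)) \<le> \<sigma> * sg_val V Ed (Suc k) (\<sigma> = 1) a"
proof -
  let ?S = "(\<lambda>(v, s). sg_val V Ed k (\<sigma> \<noteq> 1) (a(v := s))) ` (sg_unassigned V a \<times> {1, -1})"
  have moves: "sg_unassigned V a \<noteq> {}"
    using assms(3) by blast
  have S: "finite ?S" "sg_val V Ed k (\<sigma> \<noteq> 1) (a(v := s)) \<in> ?S"
    using assms(3,4) by (auto simp: finite_sg_unassigned[OF assms(1)] intro!: image_eqI[of _ _ "(v, s)"])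
  show ?thesis
  proof (cases "\<sigma> = 1")
    case True
    then show ?thesis
      using Max_ge[OF S] sg_val_Suc_moves[OF moves, of Ed k True] by simp
  next
    case False
    then have "\<sigma> = -1"
      using assms(2) by simp
    then show ?thesis
      using Min_le[OF S] sg_val_Suc_moves[OF moves, of Ed k False] by simp
  qed
qed

lemma sg_val_Suc_all_moves_bound:
  fixes \<sigma> x :: int
  assumes "finite V" "\<sigma> \<in> {1, -1}" "sg_unassigned V a \<noteq> {}"
    and "\<And>v s. v \<in> sg_unassigned V a \<Longrightarrow> s \<in> {1, -1} \<Longrightarrow> x \<le> \<sigma> * sg_val V Ed k (\<sigma> = 1) (a(v := s))"
  shows "x \<le> \<sigma> * sg_val V Ed (Suc k) (\<sigma> \<noteq> 1) a"
proof -
  let ?S = "(\<lambda>(v, s). sg_val V Ed k (\<sigma> = 1) (a(v := s))) ` (sg_unassigned V a \<times> {1, -1})"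
  have S: "finite ?S" "?S \<noteq> {}"
    using assms(3) by (simp_all add: finite_sg_unassigned[OF assms(1)])
  have "x \<le> \<sigma> * e" if "e \<in> ?S" for e
    using that assms(4) by auto
  then show ?thesis
    using assms(2) Max_in[OF S] Min_in[OF S] sg_val_Suc_moves[OF assms(3), of Ed k "\<sigma> \<noteq> 1"]
    by (cases "\<sigma> = 1") simp_all
qed

definition sg_move_into :: "'a set \<Rightarrow> (('a \<Rightarrow> int) \<Rightarrow> bool) \<Rightarrow> ('a \<Rightarrow> int) \<Rightarrow> bool" where
  "sg_move_into V I a \<longleftrightarrow> (\<exists>v\<in>sg_unassigned V a. \<exists>s\<in>{1, -1}. I (a(v := s)))"

lemma sg_move_into_unassigned: "sg_move_into V I a \<Longrightarrow> sg_unassigned V a \<noteq> {}"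
  by (auto simp: sg_move_into_def)

text \<open>The player with sign \<open>\<sigma>\<close> (\<open>1\<close> for P, \<open>-1\<close> for N) plays a strategy keeping the
  positions in which it is to move inside \<open>J\<close> and those it leaves to the opponent inside \<open>I\<close>.\<close>

lemma sg_val_strategy_bound:
  fixes \<sigma> x :: int
  assumes fin: "finite V" and \<sigma>: "\<sigma> \<in> {1, -1}"
    and own_move: "\<And>a. J a \<Longrightarrow> sg_unassigned V a \<noteq> {} \<Longrightarrow> sg_move_into V I a"
    and opp_move: "\<And>a v s. I a \<Longrightarrow> v \<in> sg_unassigned V a \<Longrightarrow> s \<in> {1, -1} \<Longrightarrow> J (a(v := s))"
    and own_end: "\<And>a. J a \<Longrightarrow> sg_unassigned V a = {} \<Longrightarrow> x \<le> \<sigma> * sgn (sg_score Ed a)"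
    and opp_end: "\<And>a. I a \<Longrightarrow> sg_unassigned V a = {} \<Longrightarrow> x \<le> \<sigma> * sgn (sg_score Ed a)"
    and "card (sg_unassigned V a) \<le> k"
  shows "(J a \<longrightarrow> x \<le> \<sigma> * sg_val V Ed k (\<sigma> = 1) a)
       \<and> (I a \<longrightarrow> x \<le> \<sigma> * sg_val V Ed k (\<sigma> \<noteq> 1) a)"
  using \<open>card (sg_unassigned V a) \<le> k\<close>
proof (induction k arbitrary: a)
  case 0
  then have "sg_unassigned V a = {}"
    using finite_sg_unassigned[OF fin] by simp
  then show ?case
    using own_end opp_end by simp
next
  case (Suc k)
  show ?case
  proof (cases "sg_unassigned V a = {}")
    case True
    then show ?thesis
      using own_end opp_end by simp
  next
    case False
    have IH: "(J (a(v := s)) \<longrightarrow> x \<le> \<sigma> * sg_val V Ed k (\<sigma> = 1) (a(v := s)))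
            \<and> (I (a(v := s)) \<longrightarrow> x \<le> \<sigma> * sg_val V Ed k (\<sigma> \<noteq> 1) (a(v := s)))"
      if "v \<in> sg_unassigned V a" "s \<in> {1, -1}" for v s
    proof (rule Suc.IH)
      have "sg_unassigned V (a(v := s)) = sg_unassigned V a - {v}"
        using that by (auto simp: sg_unassigned_def)
      then show "card (sg_unassigned V (a(v := s))) \<le> k"
        using that Suc.prems finite_sg_unassigned[OF fin] by simp
    qed
    have "x \<le> \<sigma> * sg_val V Ed (Suc k) (\<sigma> = 1) a" if "J a"
    proof -
      obtain v s where vs: "v \<in> sg_unassigned V a" "s \<in> {1, -1}" "I (a(v := s))"
        using own_move[OF \<open>J a\<close> False] by (auto simp: sg_move_into_def)
      then have "x \<le> \<sigma> * sg_val V Ed k (\<sigma> \<noteq> 1) (a(v := s))"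
        using IH by blast
      then show ?thesis
        using sg_val_Suc_move_bound[OF fin \<sigma> vs(1,2), where Ed = Ed and k = k] by linarith
    qed
    moreover have "x \<le> \<sigma> * sg_val V Ed (Suc k) (\<sigma> \<noteq> 1) a" if "I a"
      using IH opp_move[OF that] by (intro sg_val_Suc_all_moves_bound[OF fin \<sigma> False]) blast
    ultimately show ?thesis
      by blast
  qed
qed

lemma sign_game_result_strategy_bound:
  fixes \<sigma> x :: int
  assumes "finite V" and "\<sigma> \<in> {1, -1}"
    and "\<And>a. J a \<Longrightarrow> sg_unassigned V a \<noteq> {} \<Longrightarrow> sg_move_into V I a"
    and "\<And>a v s. I a \<Longrightarrow> v \<in> sg_unassigned V a \<Longrightarrow> s \<in> {1, -1} \<Longrightarrow> J (a(v := s))"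
    and "\<And>a. J a \<Longrightarrow> sg_unassigned V a = {} \<Longrightarrow> x \<le> \<sigma> * sgn (sg_score Ed a)"
    and "\<And>a. I a \<Longrightarrow> sg_unassigned V a = {} \<Longrightarrow> x \<le> \<sigma> * sgn (sg_score Ed a)"
  shows "(J (\<lambda>_. 0) \<longrightarrow> x \<le> \<sigma> * sign_game_result V Ed (\<sigma> = 1))
       \<and> (I (\<lambda>_. 0) \<longrightarrow> x \<le> \<sigma> * sign_game_result V Ed (\<sigma> \<noteq> 1))"
  using sg_val_strategy_bound[of V \<sigma> J I x Ed "\<lambda>_. 0" "card V", OF assms]
  by (simp add: sign_game_result_def sg_unassigned_def)

section \<open>Positions on a disjoint union of stars\<close>

definition star_of :: "(nat \<times> nat \<Rightarrow> int) \<Rightarrow> nat \<Rightarrow> nat \<Rightarrow> int" where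
  "star_of a i = (\<lambda>j. a (i, j))"

lemma star_of_upd [simp]:
  "star_of (a((i, j) := s)) i' = (if i' = i then (star_of a i)(j := s) else star_of a i')"
  by (auto simp: star_of_def)

lemma unassigned_stars_iff:
  "(i, j) \<in> sg_unassigned (stars_V ns) a \<longleftrightarrow> i < length ns \<and> j \<le> ns ! i \<and> star_of a i j = 0"
  by (auto simp: sg_unassigned_def stars_V_def star_of_def)

lemma finite_stars_V: "finite (stars_V ns)"
proof -
  have "stars_V ns = Sigma {..<length ns} (\<lambda>i. {..ns ! i})"
    by (auto simp: stars_V_def)
  then show ?thesis
    by simp
qed

definition star_score :: "nat \<Rightarrow> (nat \<Rightarrow> int) \<Rightarrow> int" where
  "star_score n f = f 0 * (\<Sum>j = 1..n. f j)"

lemma sg_score_stars: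
  "sg_score (stars_E ns) a = (\<Sum>i<length ns. star_score (ns ! i) (star_of a i))"
proof -
  define D where "D = Sigma {..<length ns} (\<lambda>i. {1..ns ! i})"
  have E: "stars_E ns = (\<lambda>(i, j). {(i, 0), (i, j)}) ` D"
    unfolding stars_E_def D_def image_def by fastforce
  have inj: "inj_on (\<lambda>(i, j). {(i, 0::nat), (i, j)}) D"
    by (auto simp: inj_on_def D_def doubleton_eq_iff)
  have "sg_score (stars_E ns) a = (\<Sum>(i, j)\<in>D. \<Prod>v\<in>{(i, 0), (i, j)}. a v)"
    unfolding sg_score_def E by (subst sum.reindex[OF inj]) (simp add: case_prod_unfold o_def)
  also have "\<dots> = (\<Sum>(i, j)\<in>D. a (i, 0) * a (i, j))"
    by (rule sum.cong) (auto simp: D_def)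
  also have "\<dots> = (\<Sum>i<length ns. \<Sum>j = 1..ns ! i. a (i, 0) * a (i, j))"
    unfolding D_def by (rule sum.Sigma[symmetric]) auto
  finally show ?thesis
    by (simp add: star_score_def star_of_def sum_distrib_left)
qed

section \<open>Pairing the leaves of a star\<close>

text \<open>A pair with leaf values \<open>p, q\<close> in a star with centre value \<open>c\<close>. Half-filled pairs
  (the last disjunct) are needed only when all stars are even.\<close>

definition pair_safe :: "bool \<Rightarrow> int \<Rightarrow> int \<Rightarrow> int \<Rightarrow> int \<Rightarrow> bool" where
  "pair_safe half \<sigma> c p q \<longleftrightarrow>
     p = 0 \<and> q = 0
     \<or> p \<noteq> 0 \<and> q \<noteq> 0 \<and> (c = 0 \<longrightarrow> p + q = 0) \<and> 0 \<le> \<sigma> * c * (p + q)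
     \<or> half \<and> c \<noteq> 0 \<and> (p = \<sigma> * c \<and> q = 0 \<or> p = 0 \<and> q = \<sigma> * c)"

lemma pair_safe_commute: "pair_safe half \<sigma> c p q = pair_safe half \<sigma> c q p"
  by (auto simp: pair_safe_def add.commute)

definition partner :: "nat \<Rightarrow> nat" where
  "partner j = (if odd j then j + 1 else j - 1)"

lemma paired_leaf:
  assumes "1 \<le> j" "j \<le> 2 * (n div 2)"
  obtains m where "m < n div 2"
    and "j = 2*m+1 \<and> partner j = 2*m+2 \<or> j = 2*m+2 \<and> partner j = 2*m+1"
proof
  show "(j - 1) div 2 < n div 2"
    using assms by linarith
  show "j = 2 * ((j - 1) div 2) + 1 \<and> partner j = 2 * ((j - 1) div 2) + 2
      \<or> j = 2 * ((j - 1) div 2) + 2 \<and> partner j = 2 * ((j - 1) div 2) + 1"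
    using assms(1) unfolding partner_def by presburger
qed

lemma partner_paired:
  assumes "1 \<le> j" "j \<le> 2 * (n div 2)"
  shows "1 \<le> partner j" "partner j \<le> 2 * (n div 2)" "partner j \<noteq> j"
  by (rule paired_leaf[OF assms]; auto)+

definition pairs_safe :: "bool \<Rightarrow> int \<Rightarrow> nat \<Rightarrow> (nat \<Rightarrow> int) \<Rightarrow> bool" where
  "pairs_safe half \<sigma> n f \<longleftrightarrow>
     f 0 \<in> {-1, 0, 1} \<and> (\<forall>m < n div 2. pair_safe half \<sigma> (f 0) (f (2*m+1)) (f (2*m+2)))"

lemma pairs_safe_leaf:
  assumes "pairs_safe half \<sigma> n f" "1 \<le> j" "j \<le> 2 * (n div 2)"
  shows "pair_safe half \<sigma> (f 0) (f j) (f (partner j))"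
proof -
  obtain m where "m < n div 2"
    and "j = 2*m+1 \<and> partner j = 2*m+2 \<or> j = 2*m+2 \<and> partner j = 2*m+1"
    using paired_leaf[OF assms(2,3)] .
  then show ?thesis
    using assms(1) pair_safe_commute by (auto simp: pairs_safe_def)
qed

lemma pairs_safe_update_leaf:
  assumes "pairs_safe half \<sigma> n f" "1 \<le> j" "j \<le> 2 * (n div 2)"
    and "\<forall>k. k \<noteq> j \<longrightarrow> k \<noteq> partner j \<longrightarrow> g k = f k"
    and "pair_safe half \<sigma> (g 0) (g j) (g (partner j))"
  shows "pairs_safe half \<sigma> n g"
proof -
  obtain m where "m < n div 2"
    and jm: "j = 2*m+1 \<and> partner j = 2*m+2 \<or> j = 2*m+2 \<and> partner j = 2*m+1"
    using paired_leaf[OF assms(2,3)] .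
  have g0: "g 0 = f 0"
    using assms(4) jm by auto
  have "pair_safe half \<sigma> (g 0) (g (2*m'+1)) (g (2*m'+2))" if "m' < n div 2" for m'
  proof (cases "m' = m")
    case True
    then show ?thesis
      using assms(5) jm pair_safe_commute by auto
  next
    case False
    then have "g (2*m'+1) = f (2*m'+1)" "g (2*m'+2) = f (2*m'+2)"
      using assms(4) jm by auto
    then show ?thesis
      using assms(1) that g0 by (simp add: pairs_safe_def)
  qed
  then show ?thesis
    using assms(1) g0 by (simp add: pairs_safe_def)
qed

lemma pairs_safe_center:
  assumes "pairs_safe half \<sigma> n f" "f 0 = 0" "s \<in> {1, -1}"
  shows "pairs_safe half \<sigma> n (f(0 := s))"
  using assms by (auto simp: pairs_safe_def pair_safe_def)

lemma pairs_safe_frame: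
  assumes "pairs_safe half \<sigma> n f" "g 0 = f 0" "\<forall>k. 1 \<le> k \<longrightarrow> k \<le> 2 * (n div 2) \<longrightarrow> g k = f k"
  shows "pairs_safe half \<sigma> n g"
proof -
  have "g (2*m+1) = f (2*m+1) \<and> g (2*m+2) = f (2*m+2)" if "m < n div 2" for m
    using assms(3) that by simp
  then show ?thesis
    using assms(1,2) by (simp add: pairs_safe_def)
qed

lemma pairs_safe_reply:
  assumes "pairs_safe half \<sigma> n f" "\<sigma> \<in> {1, -1}" "1 \<le> j" "j \<le> 2 * (n div 2)"
    and "f j = 0" "f (partner j) = 0" "s \<in> {1, -1}"
  shows "\<exists>t\<in>{1, -1}. pairs_safe half \<sigma> n (f(j := s, partner j := t))"
proof -
  define t where "t = (if f 0 = 0 then -s else \<sigma> * f 0)"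
  have c: "f 0 \<in> {-1, 0, 1}"
    using assms(1) by (simp add: pairs_safe_def)
  then have t: "t \<in> {1, -1}"
    using assms(2,7) by (auto simp: t_def)
  have "partner j \<noteq> j" "partner j \<noteq> 0" "j \<noteq> 0"
    using partner_paired[OF assms(3,4)] assms(3) by auto
  then have "pairs_safe half \<sigma> n (f(j := s, partner j := t))"
    using c assms(2,7)
    by (intro pairs_safe_update_leaf[OF assms(1,3,4)]) (auto simp: pair_safe_def t_def)
  with t show ?thesis
    by blast
qed

definition last_leaf_safe :: "int \<Rightarrow> nat \<Rightarrow> (nat \<Rightarrow> int) \<Rightarrow> bool" where
  "last_leaf_safe \<sigma> n f \<longleftrightarrow> (odd n \<longrightarrow> f 0 = 0 \<and> f n = 0 \<or> f 0 \<noteq> 0 \<and> f n = \<sigma> * f 0)"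

lemma last_leaf_safe_update_paired:
  assumes "last_leaf_safe \<sigma> n f" "1 \<le> j" "j \<le> 2 * (n div 2)"
  shows "last_leaf_safe \<sigma> n (f(j := s))"
proof -
  have "odd n \<Longrightarrow> j \<noteq> n"
    using assms(3) by presburger
  then show ?thesis
    using assms(1,2) by (auto simp: last_leaf_safe_def)
qed

lemma sum_atLeastAtMost_pairs:
  fixes f :: "nat \<Rightarrow> 'a::comm_monoid_add"
  shows "(\<Sum>j = 1..n. f j) = (\<Sum>m < n div 2. f (2*m+1) + f (2*m+2)) + (if odd n then f n else 0)"
proof -
  have even: "(\<Sum>j = 1..2*k. f j) = (\<Sum>m < k. f (2*m+1) + f (2*m+2))" for k
    by (induction k) (simp_all add: sum.cl_ivl_Suc add.assoc)
  show ?thesis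
  proof (cases "even n")
    case True
    then show ?thesis
      using even[of "n div 2"] by simp
  next
    case False
    then obtain k where "n = Suc (2 * k)"
      using oddE by fastforce
    then show ?thesis
      using even[of k] by (simp add: sum.cl_ivl_Suc)
  qed
qed

lemma star_score_bound:
  assumes "pairs_safe half \<sigma> n f" "last_leaf_safe \<sigma> n f" "\<sigma> \<in> {1, -1}" "\<forall>j\<le>n. f j \<noteq> 0"
  shows "(if odd n then 1 else 0) \<le> \<sigma> * star_score n f"
proof -
  have c: "f 0 \<in> {-1, 1}"
    using assms(1,4) by (auto simp: pairs_safe_def)
  have pairs: "0 \<le> \<sigma> * f 0 * (f (2*m+1) + f (2*m+2))" if "m < n div 2" for m
  proof -
    have "pair_safe half \<sigma> (f 0) (f (2*m+1)) (f (2*m+2))"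
      using assms(1) that by (simp add: pairs_safe_def)
    moreover have "f (2*m+1) \<noteq> 0" "f (2*m+2) \<noteq> 0"
      using assms(4) that by auto
    ultimately show ?thesis
      by (auto simp: pair_safe_def)
  qed
  have last: "\<sigma> * f 0 * f n = 1" if "odd n"
    using assms(2,3) c that by (auto simp: last_leaf_safe_def)
  have "\<sigma> * star_score n f = (\<Sum>m < n div 2. \<sigma> * f 0 * (f (2*m+1) + f (2*m+2)))
                           + (if odd n then \<sigma> * f 0 * f n else 0)"
    unfolding star_score_def sum_atLeastAtMost_pairs by (simp add: sum_distrib_left algebra_simps)
  moreover have "0 \<le> (\<Sum>m < n div 2. \<sigma> * f 0 * (f (2*m+1) + f (2*m+2)))"
    by (rule sum_nonneg) (use pairs in simp)
  ultimately show ?thesis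
    using last by auto
qed

section \<open>Answering moves inside a star\<close>

lemma star_reply_nonlosing:
  assumes "pairs_safe True \<sigma> n f" "even n" "\<sigma> \<in> {1, -1}" "j \<le> n" "f j = 0" "s \<in> {1, -1}"
  shows "pairs_safe True \<sigma> n (f(j := s))
    \<or> (\<exists>j'\<le>n. (f(j := s)) j' = 0 \<and> (\<exists>t\<in>{1, -1}. pairs_safe True \<sigma> n (f(j := s, j' := t))))"
proof (cases "j = 0")
  case True
  then show ?thesis
    using pairs_safe_center assms by auto
next
  case False
  then have j: "1 \<le> j" "j \<le> 2 * (n div 2)"
    using assms(2,4) by auto
  note partner = partner_paired[OF j]
  show ?thesis
  proof (cases "f (partner j) = 0")
    case True
    have "\<exists>t\<in>{1, -1}. pairs_safe True \<sigma> n (f(j := s, partner j := t))"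
      using pairs_safe_reply[OF assms(1,3) j assms(5) True assms(6)] .
    moreover have "(f(j := s)) (partner j) = 0" "partner j \<le> n"
      using True partner by auto
    ultimately show ?thesis
      by blast
  next
    case False
    \<comment> \<open>the opponent completes a pair that was half-filled with \<open>\<sigma> * f 0\<close>\<close>
    have "f 0 \<in> {-1, 0, 1}" "pair_safe True \<sigma> (f 0) 0 (f (partner j))"
      using assms(1,5) pairs_safe_leaf[OF assms(1) j] by (auto simp: pairs_safe_def)
    then have "pair_safe True \<sigma> (f 0) s (f (partner j))"
      using False assms(3,6) by (auto simp: pair_safe_def)
    then have "pairs_safe True \<sigma> n (f(j := s))"
      using j partner by (intro pairs_safe_update_leaf[OF assms(1) j]) auto
    then show ?thesis
      by blast
  qed
qed

lemma star_free_move_nonlosing: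
  assumes "pairs_safe True \<sigma> n f" "even n" "\<sigma> \<in> {1, -1}" "j \<le> n" "f j = 0"
  shows "\<exists>j'\<le>n. f j' = 0 \<and> (\<exists>t\<in>{1, -1}. pairs_safe True \<sigma> n (f(j' := t)))"
proof (cases "f 0 = 0")
  case True
  then show ?thesis
    using pairs_safe_center[OF assms(1) True, of 1] by force
next
  case False
  \<comment> \<open>the centre is taken, so half-fill the pair of \<open>j\<close> in the player's favour\<close>
  then have "j \<noteq> 0"
    using assms(5) by (cases "j = 0") auto
  then have j: "1 \<le> j" "j \<le> 2 * (n div 2)"
    using assms(2,4) by auto
  have c: "f 0 \<in> {-1, 1}"
    using assms(1) False by (auto simp: pairs_safe_def)
  have "pair_safe True \<sigma> (f 0) 0 (f (partner j))"
    using pairs_safe_leaf[OF assms(1) j] assms(5) by simp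
  then have "pair_safe True \<sigma> (f 0) (\<sigma> * f 0) (f (partner j))"
    using c assms(3) by (auto simp: pair_safe_def)
  then have "pairs_safe True \<sigma> n (f(j := \<sigma> * f 0))"
    using j partner_paired[OF j] by (intro pairs_safe_update_leaf[OF assms(1) j]) auto
  moreover have "\<sigma> * f 0 \<in> {1, -1}"
    using c assms(3) by auto
  ultimately show ?thesis
    using assms(4,5) by blast
qed

lemma last_leaf_safe_open_iff:
  assumes "last_leaf_safe \<sigma> n f" "odd n" "\<sigma> \<in> {1, -1}"
  shows "f 0 = 0 \<longleftrightarrow> f n = 0"
  using assms by (auto simp: last_leaf_safe_def)

lemma star_fill_center_last_leaf:
  assumes "pairs_safe half \<sigma> n f" "odd n" "f 0 = 0" "c \<in> {1, -1}"
  shows "pairs_safe half \<sigma> n (f(0 := c, n := \<sigma> * c)) \<and> last_leaf_safe \<sigma> n (f(0 := c, n := \<sigma> * c))"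
proof
  have "2 * (n div 2) < n"
    using assms(2) by presburger
  then show "pairs_safe half \<sigma> n (f(0 := c, n := \<sigma> * c))"
    by (intro pairs_safe_frame[OF pairs_safe_center[OF assms(1,3,4)]]) auto
  show "last_leaf_safe \<sigma> n (f(0 := c, n := \<sigma> * c))"
    using assms(2,4) by (auto simp: last_leaf_safe_def)
qed

lemma star_reply_winning:
  assumes "pairs_safe False \<sigma> n f" "last_leaf_safe \<sigma> n f" "\<sigma> \<in> {1, -1}"
    and "j \<le> n" "f j = 0" "s \<in> {1, -1}" "j \<noteq> 0 \<or> odd n"
  shows "\<exists>j'\<le>n. (f(j := s)) j' = 0 \<and> (j' = 0 \<longrightarrow> odd n) \<and> (\<exists>t\<in>{1, -1}.
           pairs_safe False \<sigma> n (f(j := s, j' := t)) \<and> last_leaf_safe \<sigma> n (f(j := s, j' := t)))"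
proof -
  have "j = 0 \<and> odd n \<or> j = n \<and> odd n \<and> j \<noteq> 0 \<or> 1 \<le> j \<and> j \<le> 2 * (n div 2)"
    using assms(4,7) by presburger
  then consider (center) "j = 0" "odd n" | (last) "j = n" "odd n" "j \<noteq> 0"
    | (paired) "1 \<le> j" "j \<le> 2 * (n div 2)"
    by blast
  then show ?thesis
  proof cases
    case center
    then have "f n = 0" "n \<noteq> 0"
      using assms(3,5) last_leaf_safe_open_iff[OF assms(2)] odd_pos by auto
    moreover have "\<sigma> * s \<in> {1, -1}"
      using assms(3,6) by auto
    ultimately show ?thesis
      using star_fill_center_last_leaf[OF assms(1) center(2) _ assms(6)] assms(5) center
      by (intro exI[of _ n]) auto
  next
    case last
    then have "f 0 = 0"
      using assms(3,5) last_leaf_safe_open_iff[OF assms(2)] by auto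
    have st: "\<sigma> * s \<in> {1, -1}" "\<sigma> * (\<sigma> * s) = s"
      using assms(3,6) by auto
    have "f(n := s, 0 := \<sigma> * s) = f(0 := \<sigma> * s, n := \<sigma> * (\<sigma> * s))"
      using last(3) unfolding last(1) st(2) by (rule fun_upd_twist)
    then have "pairs_safe False \<sigma> n (f(n := s, 0 := \<sigma> * s))
        \<and> last_leaf_safe \<sigma> n (f(n := s, 0 := \<sigma> * s))"
      using star_fill_center_last_leaf[OF assms(1) last(2) \<open>f 0 = 0\<close> st(1)] by simp
    moreover have "(f(n := s)) 0 = 0"
      using last \<open>f 0 = 0\<close> by simp
    ultimately show ?thesis
      unfolding last(1) using st(1) last(2) by blast
  next
    case paired
    note partner = partner_paired[OF paired]
    have "f (partner j) = 0"
      using pairs_safe_leaf[OF assms(1) paired] assms(5) by (simp add: pair_safe_def)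
    then obtain t where "t \<in> {1, -1}" "pairs_safe False \<sigma> n (f(j := s, partner j := t))"
      using pairs_safe_reply[OF assms(1,3) paired assms(5) _ assms(6)] by blast
    moreover have "last_leaf_safe \<sigma> n (f(j := s, partner j := t))"
      using assms(2) paired partner by (intro last_leaf_safe_update_paired) auto
    moreover have "partner j \<le> n" "(f(j := s)) (partner j) = 0"
      using partner \<open>f (partner j) = 0\<close> by auto
    ultimately show ?thesis
      using partner(1) by (intro exI[of _ "partner j"]) auto
  qed
qed

section \<open>The strategies on the whole graph\<close>

definition stars_all ::
  "nat list \<Rightarrow> (nat \<Rightarrow> (nat \<Rightarrow> int) \<Rightarrow> bool) \<Rightarrow> (nat \<times> nat \<Rightarrow> int) \<Rightarrow> bool" where
  "stars_all ns P a \<longleftrightarrow> (\<forall>i < length ns. P (ns ! i) (star_of a i))"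

lemma stars_all_update:
  assumes "stars_all ns P a" "P (ns ! i) (star_of b i)" "\<forall>i'. i' \<noteq> i \<longrightarrow> star_of b i' = star_of a i'"
  shows "stars_all ns P b"
  using assms unfolding stars_all_def by metis

lemma sign_mult_sgn_lower_bound:
  fixes \<sigma> x y :: int
  assumes "\<sigma> \<in> {1, -1}" "x \<in> {0, 1}" "x \<le> \<sigma> * y"
  shows "x \<le> \<sigma> * sgn y"
  using assms by (auto simp: sgn_if)

lemma stars_score_bound:
  assumes "stars_all ns (pairs_safe half \<sigma>) a" "stars_all ns (last_leaf_safe \<sigma>) a" "\<sigma> \<in> {1, -1}"
    and "sg_unassigned (stars_V ns) a = {}"
  shows "int (length (filter odd ns)) \<le> \<sigma> * sg_score (stars_E ns) a"
proof -
  have "(if odd (ns ! i) then 1 else 0) \<le> \<sigma> * star_score (ns ! i) (star_of a i)" if "i < length ns" for i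
  proof (rule star_score_bound)
    show "\<forall>j \<le> ns ! i. star_of a i j \<noteq> 0"
    proof (intro allI impI)
      fix j
      assume "j \<le> ns ! i"
      moreover have "(i, j) \<notin> sg_unassigned (stars_V ns) a"
        using assms(4) by simp
      ultimately show "star_of a i j \<noteq> 0"
        using that unfolding unassigned_stars_iff by simp
    qed
  qed (use assms that in \<open>auto simp: stars_all_def\<close>)
  then have "(\<Sum>i<length ns. if odd (ns ! i) then 1 else 0) \<le> \<sigma> * sg_score (stars_E ns) a"
    unfolding sg_score_stars sum_distrib_left by (intro sum_mono) simp
  moreover have "(\<Sum>i<length ns. if odd (ns ! i) then 1 else 0 :: int) = int (length (filter odd ns))"
    by (simp add: length_filter_conv_card sum.If_cases lessThan_def Collect_conj_eq)
  ultimately show ?thesis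
    by simp
qed

lemma stars_reply_nonlosing:
  assumes inv: "stars_all ns (pairs_safe True \<sigma>) a" and "\<forall>n\<in>set ns. even n" "\<sigma> \<in> {1, -1}"
    and v: "v \<in> sg_unassigned (stars_V ns) a" and "s \<in> {1, -1}"
  shows "stars_all ns (pairs_safe True \<sigma>) (a(v := s))
    \<or> sg_move_into (stars_V ns) (stars_all ns (pairs_safe True \<sigma>)) (a(v := s))"
proof -
  obtain i j where v_eq: "v = (i, j)"
    by fastforce
  have i: "i < length ns" and j: "j \<le> ns ! i" "star_of a i j = 0"
    using v unfolding v_eq unassigned_stars_iff by auto
  have "pairs_safe True \<sigma> (ns ! i) (star_of a i)" "even (ns ! i)"
    using inv assms(2) i by (auto simp: stars_all_def)
  from star_reply_nonlosing[OF this assms(3) j assms(5)]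
  show ?thesis
  proof
    assume "pairs_safe True \<sigma> (ns ! i) ((star_of a i)(j := s))"
    then show ?thesis
      unfolding v_eq by (intro disjI1 stars_all_update[OF inv]) auto
  next
    assume "\<exists>j'\<le>ns ! i. ((star_of a i)(j := s)) j' = 0
      \<and> (\<exists>t\<in>{1, -1}. pairs_safe True \<sigma> (ns ! i) ((star_of a i)(j := s, j' := t)))"
    then obtain j' t where "j' \<le> ns ! i" "((star_of a i)(j := s)) j' = 0" "t \<in> {1, -1}"
      and "pairs_safe True \<sigma> (ns ! i) ((star_of a i)(j := s, j' := t))"
      by blast
    then have "(i, j') \<in> sg_unassigned (stars_V ns) (a(v := s))"
      and "stars_all ns (pairs_safe True \<sigma>) (a(v := s, (i, j') := t))"
      using i unfolding v_eq unassigned_stars_iff by (auto intro!: stars_all_update[OF inv])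
    then show ?thesis
      unfolding sg_move_into_def using \<open>t \<in> {1, -1}\<close> by blast
  qed
qed

lemma stars_free_move_nonlosing:
  assumes inv: "stars_all ns (pairs_safe True \<sigma>) a" and "\<forall>n\<in>set ns. even n" "\<sigma> \<in> {1, -1}"
    and "sg_unassigned (stars_V ns) a \<noteq> {}"
  shows "sg_move_into (stars_V ns) (stars_all ns (pairs_safe True \<sigma>)) a"
proof -
  obtain i j where "(i, j) \<in> sg_unassigned (stars_V ns) a"
    using assms(4) by auto
  then have i: "i < length ns" and j: "j \<le> ns ! i" "star_of a i j = 0"
    unfolding unassigned_stars_iff by auto
  have star: "pairs_safe True \<sigma> (ns ! i) (star_of a i)" "even (ns ! i)"
    using inv assms(2) i by (auto simp: stars_all_def)
  obtain j' t where "j' \<le> ns ! i" "star_of a i j' = 0" "t \<in> {1, -1}"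
    and "pairs_safe True \<sigma> (ns ! i) ((star_of a i)(j' := t))"
    using star_free_move_nonlosing[OF star assms(3) j] by blast
  then have "(i, j') \<in> sg_unassigned (stars_V ns) a"
    and "stars_all ns (pairs_safe True \<sigma>) (a((i, j') := t))"
    using i unfolding unassigned_stars_iff by (auto intro!: stars_all_update[OF inv])
  then show ?thesis
    unfolding sg_move_into_def using \<open>t \<in> {1, -1}\<close> by blast
qed

definition open_even_centers :: "nat list \<Rightarrow> (nat \<times> nat \<Rightarrow> int) \<Rightarrow> nat set" where
  "open_even_centers ns a = {i. i < length ns \<and> even (ns ! i) \<and> a (i, 0) = 0}"

lemma open_even_centers_update_other:
  "j \<noteq> 0 \<or> odd (ns ! i) \<Longrightarrow> open_even_centers ns (a((i, j) := s)) = open_even_centers ns a"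
  by (auto simp: open_even_centers_def)

definition winning_inv :: "bool \<Rightarrow> int \<Rightarrow> nat list \<Rightarrow> (nat \<times> nat \<Rightarrow> int) \<Rightarrow> bool" where
  "winning_inv par \<sigma> ns a \<longleftrightarrow>
     stars_all ns (pairs_safe False \<sigma>) a \<and> stars_all ns (last_leaf_safe \<sigma>) a
     \<and> even (card (open_even_centers ns a)) = par"

lemma winning_inv_even_center:
  assumes inv: "winning_inv par \<sigma> ns a" and i: "i \<in> open_even_centers ns a" and s: "s \<in> {1, -1}"
  shows "winning_inv (\<not> par) \<sigma> ns (a((i, 0) := s))"
proof -
  have i': "i < length ns" "even (ns ! i)" "star_of a i 0 = 0"
    using i by (auto simp: open_even_centers_def star_of_def)
  have pairs: "stars_all ns (pairs_safe False \<sigma>) a" and last: "stars_all ns (last_leaf_safe \<sigma>) a"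
    using inv by (simp_all add: winning_inv_def)
  have "pairs_safe False \<sigma> (ns ! i) (star_of a i)"
    using pairs i'(1) by (simp add: stars_all_def)
  then have "stars_all ns (pairs_safe False \<sigma>) (a((i, 0) := s))"
    using i' s by (intro stars_all_update[OF pairs, where i = i]) (simp_all add: pairs_safe_center)
  moreover have "stars_all ns (last_leaf_safe \<sigma>) (a((i, 0) := s))"
    using i' by (intro stars_all_update[OF last, where i = i]) (auto simp: last_leaf_safe_def)
  moreover have "open_even_centers ns (a((i, 0) := s)) = open_even_centers ns a - {i}"
    using s by (auto simp: open_even_centers_def)
  moreover have "finite (open_even_centers ns a)"
    by (rule finite_subset[of _ "{..<length ns}"]) (auto simp: open_even_centers_def)
  ultimately show ?thesis
    using inv i by (auto simp: winning_inv_def card_Diff_singleton)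
qed

lemma winning_inv_parity_move:
  assumes "winning_inv False \<sigma> ns a"
  shows "sg_move_into (stars_V ns) (winning_inv True \<sigma> ns) a"
proof -
  have "card (open_even_centers ns a) \<noteq> 0"
    using assms odd_pos by (fastforce simp: winning_inv_def)
  then obtain i where i: "i \<in> open_even_centers ns a"
    by fastforce
  then have "(i, 0) \<in> sg_unassigned (stars_V ns) a"
    by (auto simp: open_even_centers_def unassigned_stars_iff star_of_def)
  moreover have "winning_inv True \<sigma> ns (a((i, 0) := 1))"
    using winning_inv_even_center[OF assms i, of 1] by simp
  ultimately show ?thesis
    unfolding sg_move_into_def by blast
qed

lemma winning_inv_reply:
  assumes inv: "winning_inv True \<sigma> ns a" and \<sigma>: "\<sigma> \<in> {1, -1}"
    and v: "v \<in> sg_unassigned (stars_V ns) a" and s: "s \<in> {1, -1}"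
  shows "winning_inv False \<sigma> ns (a(v := s)) \<or> sg_move_into (stars_V ns) (winning_inv True \<sigma> ns) (a(v := s))"
proof -
  obtain i j where v_eq: "v = (i, j)"
    by fastforce
  have i: "i < length ns" and j: "j \<le> ns ! i" "star_of a i j = 0"
    using v unfolding v_eq unassigned_stars_iff by auto
  have pairs: "stars_all ns (pairs_safe False \<sigma>) a" and last: "stars_all ns (last_leaf_safe \<sigma>) a"
    using inv by (simp_all add: winning_inv_def)
  show ?thesis
  proof (cases "j = 0 \<and> even (ns ! i)")
    case True
    then have "i \<in> open_even_centers ns a"
      using i j by (auto simp: open_even_centers_def star_of_def)
    then show ?thesis
      using winning_inv_even_center[OF inv _ s] True unfolding v_eq by auto
  next
    case False
    then have other_move: "j \<noteq> 0 \<or> odd (ns ! i)"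
      by auto
    have star: "pairs_safe False \<sigma> (ns ! i) (star_of a i)" "last_leaf_safe \<sigma> (ns ! i) (star_of a i)"
      using pairs last i by (simp_all add: stars_all_def)
    obtain j' t where j': "j' \<le> ns ! i" "((star_of a i)(j := s)) j' = 0" "j' = 0 \<longrightarrow> odd (ns ! i)"
      and t: "t \<in> {1, -1}" "pairs_safe False \<sigma> (ns ! i) ((star_of a i)(j := s, j' := t))"
        "last_leaf_safe \<sigma> (ns ! i) ((star_of a i)(j := s, j' := t))"
      using star_reply_winning[OF star \<sigma> j s other_move] by blast
    let ?b = "a((i, j) := s, (i, j') := t)"
    have "open_even_centers ns ?b = open_even_centers ns (a((i, j) := s))"
      by (rule open_even_centers_update_other) (use j'(3) in blast)
    also have "\<dots> = open_even_centers ns a"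
      using other_move by (rule open_even_centers_update_other)
    moreover have "stars_all ns (pairs_safe False \<sigma>) ?b" "stars_all ns (last_leaf_safe \<sigma>) ?b"
      using t by (intro stars_all_update[OF pairs, where i = i] stars_all_update[OF last, where i = i];
          simp)+
    ultimately have "winning_inv True \<sigma> ns ?b"
      using inv by (simp add: winning_inv_def)
    moreover have "(i, j') \<in> sg_unassigned (stars_V ns) (a((i, j) := s))"
      using i j' unfolding unassigned_stars_iff by simp
    ultimately show ?thesis
      unfolding v_eq sg_move_into_def using t(1) by blast
  qed
qed

lemma stars_even_nonlosing:
  assumes even: "\<forall>n\<in>set ns. even n" and \<sigma>: "\<sigma> \<in> {1, -1}"
  shows "0 \<le> \<sigma> * sign_game_result (stars_V ns) (stars_E ns) b"
proof -
  let ?I = "stars_all ns (pairs_safe True \<sigma>)"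
  let ?J = "\<lambda>a. ?I a \<or> sg_move_into (stars_V ns) ?I a"
  have end_bound: "0 \<le> \<sigma> * sgn (sg_score (stars_E ns) a)"
    if "?I a" "sg_unassigned (stars_V ns) a = {}" for a
  proof (rule sign_mult_sgn_lower_bound[OF \<sigma>])
    have "stars_all ns (last_leaf_safe \<sigma>) a"
      using even by (auto simp: stars_all_def last_leaf_safe_def)
    then show "0 \<le> \<sigma> * sg_score (stars_E ns) a"
      using stars_score_bound[OF that(1) _ \<sigma> that(2)] by simp
  qed simp
  have "(?J (\<lambda>_. 0) \<longrightarrow> 0 \<le> \<sigma> * sign_game_result (stars_V ns) (stars_E ns) (\<sigma> = 1))
      \<and> (?I (\<lambda>_. 0) \<longrightarrow> 0 \<le> \<sigma> * sign_game_result (stars_V ns) (stars_E ns) (\<sigma> \<noteq> 1))"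
  proof (rule sign_game_result_strategy_bound[OF finite_stars_V \<sigma>])
    show "sg_move_into (stars_V ns) ?I a" if "?J a" "sg_unassigned (stars_V ns) a \<noteq> {}" for a
      using that stars_free_move_nonlosing[OF _ even \<sigma>] by blast
    show "?J (a(v := s))" if "?I a" "v \<in> sg_unassigned (stars_V ns) a" "s \<in> {1, -1}" for a v s
      using stars_reply_nonlosing[OF that(1) even \<sigma> that(2,3)] .
    show "0 \<le> \<sigma> * sgn (sg_score (stars_E ns) a)" if "?J a" "sg_unassigned (stars_V ns) a = {}" for a
      using that end_bound sg_move_into_unassigned by blast
  qed (rule end_bound)
  moreover have "?I (\<lambda>_. 0)"
    by (simp add: stars_all_def star_of_def pairs_safe_def pair_safe_def)
  ultimately show ?thesis
    by (cases "b = (\<sigma> = 1)") auto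
qed

lemma stars_odd_winning:
  assumes odd: "\<exists>n\<in>set ns. odd n" and \<sigma>: "\<sigma> \<in> {1, -1}"
  shows "1 \<le> \<sigma> * sign_game_result (stars_V ns) (stars_E ns) ((\<sigma> = 1) = odd (length (filter even ns)))"
proof -
  let ?I = "winning_inv True \<sigma> ns"
  let ?J = "\<lambda>a. winning_inv False \<sigma> ns a \<or> sg_move_into (stars_V ns) ?I a"
  have end_bound: "1 \<le> \<sigma> * sgn (sg_score (stars_E ns) a)"
    if "?I a" "sg_unassigned (stars_V ns) a = {}" for a
  proof (rule sign_mult_sgn_lower_bound[OF \<sigma>])
    have "filter odd ns \<noteq> []"
      using odd by (simp add: filter_empty_conv)
    then have "1 \<le> int (length (filter odd ns))"
      by (cases "filter odd ns") simp_all
    then show "1 \<le> \<sigma> * sg_score (stars_E ns) a"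
      using that stars_score_bound[OF _ _ \<sigma> that(2)] by (fastforce simp: winning_inv_def)
  qed simp
  have "(?J (\<lambda>_. 0) \<longrightarrow> 1 \<le> \<sigma> * sign_game_result (stars_V ns) (stars_E ns) (\<sigma> = 1))
      \<and> (?I (\<lambda>_. 0) \<longrightarrow> 1 \<le> \<sigma> * sign_game_result (stars_V ns) (stars_E ns) (\<sigma> \<noteq> 1))"
  proof (rule sign_game_result_strategy_bound[OF finite_stars_V \<sigma>])
    show "sg_move_into (stars_V ns) ?I a" if "?J a" "sg_unassigned (stars_V ns) a \<noteq> {}" for a
      using that winning_inv_parity_move by blast
    show "?J (a(v := s))" if "?I a" "v \<in> sg_unassigned (stars_V ns) a" "s \<in> {1, -1}" for a v s
      using winning_inv_reply[OF that(1) \<sigma> that(2,3)] .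
    show "1 \<le> \<sigma> * sgn (sg_score (stars_E ns) a)" if "?J a" "sg_unassigned (stars_V ns) a = {}" for a
      using that winning_inv_parity_move sg_move_into_unassigned by blast
  qed (rule end_bound)
  moreover have "winning_inv (even (length (filter even ns))) \<sigma> ns (\<lambda>_. 0)"
    by (simp add: winning_inv_def stars_all_def star_of_def pairs_safe_def pair_safe_def
        last_leaf_safe_def open_even_centers_def length_filter_conv_card)
  ultimately show ?thesis
    by (cases "odd (length (filter even ns))") auto
qed

theorem theorem3:
  fixes ns :: "nat list"
  assumes "ns \<noteq> []" and "\<forall>n\<in>set ns. n \<ge> 1"
  shows "((\<forall>n\<in>set ns. even n) \<longrightarrow>
            (\<forall>b. sign_game_result (stars_V ns) (stars_E ns) b = 0))
       \<and> ((\<exists>n\<in>set ns. odd n) \<and> even (length (filter even ns)) \<longrightarrow>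
            sign_game_result (stars_V ns) (stars_E ns) True = -1 \<and>
            sign_game_result (stars_V ns) (stars_E ns) False = 1)
       \<and> ((\<exists>n\<in>set ns. odd n) \<and> odd (length (filter even ns)) \<longrightarrow>
            sign_game_result (stars_V ns) (stars_E ns) True = 1 \<and>
            sign_game_result (stars_V ns) (stars_E ns) False = -1)"
proof -
  let ?r = "sign_game_result (stars_V ns) (stars_E ns)"
  have range: "?r b \<in> {-1, 0, 1}" for b
    unfolding sign_game_result_def by (rule sg_val_range[OF finite_stars_V])
  have draw: "?r b = 0" if "\<forall>n\<in>set ns. even n" for b
    using stars_even_nonlosing[OF that, of 1 b] stars_even_nonlosing[OF that, of "-1" b] by simp
  have P_wins: "?r (odd (length (filter even ns))) = 1" if "\<exists>n\<in>set ns. odd n"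
    using stars_odd_winning[OF that, of 1] range[of "odd (length (filter even ns))"] by auto
  have N_wins: "?r (even (length (filter even ns))) = -1" if "\<exists>n\<in>set ns. odd n"
    using stars_odd_winning[OF that, of "-1"] range[of "even (length (filter even ns))"] by auto
  show ?thesis
    using draw P_wins N_wins by (cases "even (length (filter even ns))") auto
qed

end
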